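(* Let $\mathrm{FRS}_q^{(m)}[n,k]$ be the $m$-folded Reed–Solomon code with block length $N=n/m$ and rate $R=k/n$, let $s\in[m]$, and let $\mathbf y\in(\mathbb F_q^m)^N$. Let $U$ be an affine subspace, of some dimension $l<s$, of the space $\mathbb F_q[X]_{<k}$ of polynomials of degree less than $k$, as returned by the list decoder (see context) on input $\mathbf y$, and let $f\in\mathbb F_q[X]_{<k}$ be a polynomial whose FRS encoding differs from $\mathbf y$ in at most a fraction $\frac{s}{s+1}\left(1-\frac{mR}{m-s+1}\right)$ of the $N$ positions (so $f\in U$). Let $t$ be an integer with $l\le t\le q-1$, and let $\lambda_1,\dots,\lambda_t$ be chosen so that $\lambda_i$ is uniform on $\mathbb F_q\setminus\{0,\lambda_1,\dots,\lambda_{i-1}\}$ for $i\in[t]$ (i.e. $\{\lambda_1,\dots,\lambda_t\}$ is a uniformly random $t$-subset of $\mathbb F_q^*$). Then, with probability at least $$\frac{\sum_{i=l}^{t}\binom{q-k+l-1}{i}\binom{k-l}{t-i}}{\binom{q-1}{t}},$$ $f$ is the unique element $g\in U$ with $g(\lambda_i)=f(\lambda_i)$ for all $i\in[t]$, so that $f$ is uniquely recovered from $U$ and the values $f(\lambda_1),\dots,f(\lambda_t)$. Furthermore, whenever this uniqueness fails, the decoder can detect it (from $U$ and $\lambda_1,\dots,\lambda_t$) and declare a decoding failure.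
   Context: Let $q$ be a prime power, $\gamma$ a primitive element of $\mathbb F_q$, $m\ge1$, $n\le q-1$ a multiple of $m$, $1\le k<n$. The $m$-folded Reed–Solomon code $\mathrm{FRS}_q^{(m)}[n,k]$ is a code over $\mathbb F_q^m$ of block length $N=n/m$ and rate $R=k/n$ encoding $f$ of degree $\le k-1$ as the word whose $i$-th symbol is $(f(\gamma^{(i-1)m}),\dots,f(\gamma^{im-1}))$. $\mathbb F_q^*=\mathbb F_q\setminus\{0\}$, $[i]=\{1,\dots,i\}$. List decoder (Guruswami–Wang, used as a given): for $s\in[m]$ it outputs from $\mathbf y$ an affine subspace $U=\{\mathbf M\mathbf x+\mathbf z:\mathbf x\in\mathbb F_q^l\}$ of coefficient vectors of polynomials of degree $<k$, with $l\le s-1$, $\mathbf M\in\mathbb F_q^{k\times l}$ of rank $l$, $\mathbf z\in\mathbb F_q^k$, containing all polynomials of degree $<k$ whose FRS encoding differs from $\mathbf y$ in at most a fraction $\frac{s}{s+1}(1-\frac{mR}{m-s+1})$ of the $N$ positions. *)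

theory Defs
  imports Complex_Main "HOL-Computational_Algebra.Polynomial"
begin

definition primitive_elem :: "'a::{finite,field} \<Rightarrow> bool" where
  "primitive_elem \<gamma> \<longleftrightarrow> (\<forall>x::'a. x \<noteq> 0 \<longrightarrow> (\<exists>i::nat. x = \<gamma> ^ i))"

text \<open>The i-th symbol (i < N, 0-indexed) of the m-folded RS encoding of f is the tuple
  (f(gamma^(i m)), ..., f(gamma^(i m + m - 1))). A received word y in (F_q^m)^N is a
  function y i j, i < N, j < m.\<close>
definition frs_dist :: "'a::{finite,field} \<Rightarrow> nat \<Rightarrow> nat \<Rightarrow> (nat \<Rightarrow> nat \<Rightarrow> 'a) \<Rightarrow> 'a poly \<Rightarrow> nat" where
  "frs_dist \<gamma> m N y f = card {i. i < N \<and> (\<exists>j<m. y i j \<noteq> poly f (\<gamma> ^ (i * m + j)))}"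

text \<open>Affine subspace {M x + z : x in F_q^l} of polynomials, the columns of M being the
  polynomials b 0, ..., b (l-1).\<close>
definition affine_span :: "'a::field poly \<Rightarrow> (nat \<Rightarrow> 'a poly) \<Rightarrow> nat \<Rightarrow> 'a poly set" where
  "affine_span z b l = {z + (\<Sum>j<l. smult (x j) (b j)) | x. True}"

definition lin_indep_polys :: "(nat \<Rightarrow> 'a::field poly) \<Rightarrow> nat \<Rightarrow> bool" where
  "lin_indep_polys b l \<longleftrightarrow> (\<forall>c. (\<Sum>j<l. smult (c j) (b j)) = 0 \<longrightarrow> (\<forall>j<l. c j = 0))"

end

theory Submission
  imports Defs "HOL-Library.FuncSet" "HOL-Library.Cardinality"
begin

text \<open>Since \<open>f \<in> U\<close>, we have \<open>U = f + V\<close> for an \<open>l\<close>-dimensional space \<open>V\<close> of polynomials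
  of degree \<open>< k\<close>, and \<open>f\<close> is the only element of \<open>U\<close> agreeing with \<open>f\<close> on \<open>S\<close> exactly when no
  nonzero element of \<open>V\<close> vanishes on \<open>S\<close>, i.e. when \<open>S\<close> separates \<open>V\<close>; this criterion depends
  only on \<open>U\<close> and \<open>S\<close>, so failures are detectable. To count the separating \<open>t\<close>-subsets of
  \<open>F\<^sup>*\<close>, split on a point \<open>a\<close>: a separating set either avoids \<open>a\<close>, or contains it and the
  rest separates the subspace of \<open>V\<close> vanishing at \<open>a\<close>, which has one dimension less unless
  \<open>a\<close> is a common root of \<open>V\<close>. A \<open>d\<close>-dimensional space of polynomials of degree \<open>< k\<close> has at
  most \<open>k - d\<close> common roots, so this recursion dominates the Pascal recursion of the sum
  over \<open>i \<ge> l\<close> of \<open>C(g, i) C(b, t - i)\<close>, which counts the \<open>t\<close>-subsets of \<open>g + b\<close> points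
  containing at least \<open>l\<close> of the \<open>g = q - k + l - 1\<close> good ones.\<close>

definition vandermonde_tail :: "nat \<Rightarrow> nat \<Rightarrow> nat \<Rightarrow> nat \<Rightarrow> nat" where
  "vandermonde_tail t d g b = (\<Sum>i\<le>t. if d \<le> i then (g choose i) * (b choose (t - i)) else 0)"

lemma vandermonde_tail_eq_sum:
  "vandermonde_tail t d g b = (\<Sum>i=d..t. (g choose i) * (b choose (t - i)))"
  unfolding vandermonde_tail_def by (rule sum.mono_neutral_cong_right) auto

lemma vandermonde_tail_le_choose: "vandermonde_tail t d g b \<le> (g + b) choose t"
proof -
  have "vandermonde_tail t d g b \<le> (\<Sum>i\<le>t. (g choose i) * (b choose (t - i)))"
    unfolding vandermonde_tail_def by (intro sum_mono) auto
  also have "\<dots> = (g + b) choose t" by (rule vandermonde)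
  finally show ?thesis .
qed

lemma vandermonde_tail_eq_0: "g < d \<or> t < d \<Longrightarrow> vandermonde_tail t d g b = 0"
  unfolding vandermonde_tail_def by (intro sum.neutral) auto

lemma vandermonde_tail_Suc_good:
  "vandermonde_tail (Suc t) (Suc d) (Suc g) b
     = vandermonde_tail t d g b + vandermonde_tail (Suc t) (Suc d) g b"
proof -
  have shift: "vandermonde_tail (Suc t) (Suc d) g' b
      = (\<Sum>i\<le>t. if d \<le> i then (g' choose Suc i) * (b choose (t - i)) else 0)" for g'
    unfolding vandermonde_tail_def sum.atMost_Suc_shift by (simp only: diff_Suc_Suc) simp
  have "vandermonde_tail (Suc t) (Suc d) (Suc g) b
      = (\<Sum>i\<le>t. (if d \<le> i then (g choose i) * (b choose (t - i)) else 0)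
           + (if d \<le> i then (g choose Suc i) * (b choose (t - i)) else 0))"
    unfolding shift by (intro sum.cong) (auto simp: algebra_simps)
  then show ?thesis
    unfolding shift by (simp add: sum.distrib vandermonde_tail_def)
qed

lemma vandermonde_tail_Suc_bad:
  "vandermonde_tail (Suc t) d g (Suc b)
     = vandermonde_tail t d g b + vandermonde_tail (Suc t) d g b"
proof -
  have "vandermonde_tail (Suc t) d g (Suc b)
      = (\<Sum>i\<le>t. (if d \<le> i then (g choose i) * (b choose (t - i)) else 0)
           + (if d \<le> i then (g choose i) * (b choose (Suc t - i)) else 0))
        + (if d \<le> Suc t then g choose Suc t else 0)"
    unfolding vandermonde_tail_def sum.atMost_Suc
    by (intro arg_cong2[where f = "(+)"] sum.cong) (auto simp: Suc_diff_le algebra_simps)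
  also have "\<dots> = vandermonde_tail t d g b + vandermonde_tail (Suc t) d g b"
    unfolding vandermonde_tail_def sum.distrib sum.atMost_Suc by simp
  finally show ?thesis .
qed

definition poly_subspace :: "'a::field poly set \<Rightarrow> bool" where
  "poly_subspace W \<longleftrightarrow>
     0 \<in> W \<and> (\<forall>v\<in>W. \<forall>w\<in>W. v + w \<in> W) \<and> (\<forall>c w. w \<in> W \<longrightarrow> smult c w \<in> W)"

definition common_roots :: "'a::field poly set \<Rightarrow> 'a set" where
  "common_roots W = {a. \<forall>w\<in>W. poly w a = 0}"

definition vanishing_at :: "'a::field poly set \<Rightarrow> 'a \<Rightarrow> 'a poly set" where
  "vanishing_at W a = {w\<in>W. poly w a = 0}"

definition separates :: "'a::field poly set \<Rightarrow> 'a set \<Rightarrow> bool" where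
  "separates W S \<longleftrightarrow> (\<forall>w\<in>W. (\<forall>a\<in>S. poly w a = 0) \<longrightarrow> w = 0)"

definition separating_subsets :: "'a::field poly set \<Rightarrow> 'a set \<Rightarrow> nat \<Rightarrow> 'a set set" where
  "separating_subsets W X t = {S. S \<subseteq> X \<and> card S = t \<and> separates W S}"

lemma poly_subspace_diff:
  assumes "poly_subspace W" "v \<in> W" "w \<in> W"
  shows "v - w \<in> W"
proof -
  have "v + smult (-1) w \<in> W" using assms unfolding poly_subspace_def by blast
  then show ?thesis by simp
qed

lemma poly_subspace_vanishing_at: "poly_subspace W \<Longrightarrow> poly_subspace (vanishing_at W a)"
  unfolding poly_subspace_def vanishing_at_def by auto

lemma vanishing_at_common_root: "a \<in> common_roots W \<Longrightarrow> vanishing_at W a = W"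
  unfolding vanishing_at_def common_roots_def by auto

lemma common_roots_vanishing_at: "insert a (common_roots W) \<subseteq> common_roots (vanishing_at W a)"
  unfolding common_roots_def vanishing_at_def by auto

text \<open>Off the common roots, evaluation at \<open>a\<close> splits \<open>W\<close> as \<open>F \<times> vanishing_at W a\<close>.\<close>
lemma card_vanishing_at:
  fixes W :: "'a::{finite,field} poly set"
  assumes W: "poly_subspace W" and a: "a \<notin> common_roots W"
  shows "card W = CARD('a) * card (vanishing_at W a)"
proof -
  obtain w0 where w0: "w0 \<in> W" "poly w0 a \<noteq> 0" using a unfolding common_roots_def by auto
  define split where "split = (\<lambda>(c::'a, v). v + smult c w0)"
  have "inj_on split (UNIV \<times> vanishing_at W a)"
  proof (rule inj_onI, clarify)
    fix c1 v1 c2 v2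
    assume v: "v1 \<in> vanishing_at W a" "v2 \<in> vanishing_at W a"
      and eq: "split (c1, v1) = split (c2, v2)"
    have "poly (v1 + smult c1 w0) a = poly (v2 + smult c2 w0) a"
      using eq by (simp add: split_def)
    then have "c1 * poly w0 a = c2 * poly w0 a" using v by (simp add: vanishing_at_def)
    with w0 have "c1 = c2" by simp
    with eq show "c1 = c2 \<and> v1 = v2" by (simp add: split_def)
  qed
  moreover have "split ` (UNIV \<times> vanishing_at W a) = W"
  proof
    show "split ` (UNIV \<times> vanishing_at W a) \<subseteq> W"
      using W w0 unfolding poly_subspace_def vanishing_at_def split_def by auto
    show "W \<subseteq> split ` (UNIV \<times> vanishing_at W a)"
    proof
      fix w assume w: "w \<in> W"
      define c where "c = poly w a / poly w0 a"
      have "smult c w0 \<in> W" using W w0 unfolding poly_subspace_def by blast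
      then have "w - smult c w0 \<in> vanishing_at W a"
        using poly_subspace_diff[OF W w] w0 by (simp add: vanishing_at_def c_def)
      moreover have "w = split (c, w - smult c w0)" by (simp add: split_def)
      ultimately show "w \<in> split ` (UNIV \<times> vanishing_at W a)" by blast
    qed
  qed
  ultimately show ?thesis by (metis card_image card_cartesian_product card_UNIV)
qed

text \<open>Evaluation on \<open>E \<union> common_roots W\<close> with \<open>|E| = k - r\<close> is injective on \<open>W\<close>, so
  \<open>q ^ d \<le> q ^ (k - r)\<close>.\<close>
lemma dim_plus_card_common_roots_le:
  fixes W :: "'a::{finite,field} poly set"
  assumes deg: "\<forall>w\<in>W. degree w < k" and card_W: "card W = CARD('a) ^ d"
    and d: "1 \<le> d" and k: "k \<le> CARD('a)"
  shows "d + card (common_roots W) \<le> k"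
proof -
  define r where "r = card (common_roots W)"
  have "k - r \<le> card (UNIV - common_roots W)" using k by (simp add: card_Diff_subset r_def)
  then obtain E where E: "E \<subseteq> UNIV - common_roots W" "card E = k - r"
    by (meson obtain_subset_with_card_n)
  have "k \<le> card (E \<union> common_roots W)"
    using E by (subst card_Un_disjoint) (auto simp: r_def)
  have "inj_on (\<lambda>w. restrict (poly w) E) W"
  proof (rule inj_onI)
    fix v w assume "v \<in> W" "w \<in> W" and eq: "restrict (poly v) E = restrict (poly w) E"
    have "poly v x = poly w x" if "x \<in> E \<union> common_roots W" for x
      using that fun_cong[OF eq, of x] \<open>v \<in> W\<close> \<open>w \<in> W\<close> by (auto simp: common_roots_def)
    then show "v = w"
      using poly_eqI_degree deg \<open>v \<in> W\<close> \<open>w \<in> W\<close> \<open>k \<le> card (E \<union> common_roots W)\<close>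
      by (metis order_less_le_trans)
  qed
  then have "card W \<le> card (\<Pi>\<^sub>E x\<in>E. (UNIV::'a set))"
    by (intro card_inj_on_le) auto
  then have "CARD('a) ^ d \<le> CARD('a) ^ (k - r)"
    using E card_W by (simp add: card_PiE)
  moreover have "1 < CARD('a)"
    using card_mono[of UNIV "{0::'a, 1}"] by simp
  ultimately have "d \<le> k - r" by simp
  with d show ?thesis unfolding r_def by simp
qed

lemma card_separating_subsets_zero:
  "finite X \<Longrightarrow> card (separating_subsets {0} X t) = card X choose t"
  unfolding separating_subsets_def separates_def by (simp add: n_subsets)

lemma card_separating_subsets_remove:
  assumes X: "finite X" and a: "a \<in> X"
  shows "card (separating_subsets W X (Suc t))
    = card (separating_subsets (vanishing_at W a) (X - {a}) t)
      + card (separating_subsets W (X - {a}) (Suc t))"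
proof -
  let ?A = "separating_subsets W (X - {a}) (Suc t)"
  let ?B = "separating_subsets (vanishing_at W a) (X - {a}) t"
  have separates_insert: "separates W (insert a S) \<longleftrightarrow> separates (vanishing_at W a) S" for S
    unfolding separates_def vanishing_at_def by auto
  have "separating_subsets W X (Suc t) = ?A \<union> insert a ` ?B"
  proof (intro equalityI subsetI)
    fix S assume S: "S \<in> separating_subsets W X (Suc t)"
    then have "finite S" using X finite_subset unfolding separating_subsets_def by blast
    show "S \<in> ?A \<union> insert a ` ?B"
    proof (cases "a \<in> S")
      case True
      then have "S - {a} \<in> ?B"
        using S \<open>finite S\<close> separates_insert[of "S - {a}"]
        by (auto simp: separating_subsets_def insert_absorb)
      then show ?thesis using True by (auto intro!: image_eqI[of S _ "S - {a}"])
    qed (use S in \<open>auto simp: separating_subsets_def\<close>)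
  next
    fix S assume "S \<in> ?A \<union> insert a ` ?B"
    then show "S \<in> separating_subsets W X (Suc t)"
      using a separates_insert finite_subset[OF _ finite_Diff[OF X]]
      by (auto simp: separating_subsets_def card_insert_if)
  qed
  moreover have "finite ?A" "finite ?B"
    using X by (auto simp: separating_subsets_def intro: finite_subset[of _ "Pow X"])
  moreover have "?A \<inter> insert a ` ?B = {}" "inj_on (insert a) ?B"
    by (auto simp: separating_subsets_def inj_on_def insert_ident)
  ultimately show ?thesis by (simp add: card_Un_disjoint card_image)
qed

lemma vandermonde_tail_le_step_common_root:
  assumes "finite X" "a \<in> X" "a \<in> common_roots W"
    and "vandermonde_tail t d g b \<le> card (separating_subsets W (X - {a}) t)"
    and "vandermonde_tail (Suc t) d g b \<le> card (separating_subsets W (X - {a}) (Suc t))"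
  shows "vandermonde_tail (Suc t) d g (Suc b) \<le> card (separating_subsets W X (Suc t))"
  using assms by (simp add: vandermonde_tail_Suc_bad card_separating_subsets_remove
      vanishing_at_common_root)

lemma vandermonde_tail_le_step:
  assumes "finite X" "a \<in> X"
    and "vandermonde_tail t d g b \<le> card (separating_subsets (vanishing_at W a) (X - {a}) t)"
    and "vandermonde_tail (Suc t) (Suc d) g b \<le> card (separating_subsets W (X - {a}) (Suc t))"
  shows "vandermonde_tail (Suc t) (Suc d) (Suc g) b \<le> card (separating_subsets W X (Suc t))"
  using assms by (simp add: vandermonde_tail_Suc_good card_separating_subsets_remove)

text \<open>Of the points of \<open>X\<close>, \<open>b\<close> are regarded as bad; together with the common roots outside
  \<open>X\<close> they make up for the codimension \<open>k - d\<close> of \<open>W\<close>.\<close>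
definition admissible :: "nat \<Rightarrow> 'a::{finite,field} poly set \<Rightarrow> 'a set \<Rightarrow> nat \<Rightarrow> nat \<Rightarrow> bool" where
  "admissible k W X d b \<longleftrightarrow> poly_subspace W \<and> (\<forall>w\<in>W. degree w < k) \<and> card W = CARD('a) ^ d
     \<and> k \<le> b + d + card (common_roots W - X)"

lemma admissible_remove:
  assumes "admissible k W X d b"
  shows "admissible k W (X - {a}) d b"
proof -
  have "card (common_roots W - X) \<le> card (common_roots W - (X - {a}))"
    by (intro card_mono) auto
  then show ?thesis using assms unfolding admissible_def by simp
qed

lemma admissible_remove_common_root:
  assumes "admissible k W X d (Suc b)" "a \<in> X" "a \<in> common_roots W"
  shows "admissible k W (X - {a}) d b"
proof -
  have "common_roots W - (X - {a}) = insert a (common_roots W - X)" using assms(2,3) by blast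
  then show ?thesis using assms(1,2) unfolding admissible_def by simp
qed

lemma admissible_common_root_bad:
  fixes W :: "'a::{finite,field} poly set"
  assumes "admissible k W X (Suc d) b" "k \<le> CARD('a)" "a \<in> X" "a \<in> common_roots W"
  shows "b \<noteq> 0"
proof -
  have "card (insert a (common_roots W - X)) \<le> card (common_roots W)"
    using assms(4) by (intro card_mono) auto
  moreover have "Suc d + card (common_roots W) \<le> k"
    using assms(1,2) dim_plus_card_common_roots_le[of W k "Suc d"] unfolding admissible_def by simp
  ultimately show ?thesis using assms(1,3) unfolding admissible_def by simp
qed

lemma admissible_vanishing_at:
  assumes "admissible k W X (Suc d) b" "a \<in> X" "a \<notin> common_roots W"
  shows "admissible k (vanishing_at W a) (X - {a}) d b"
proof -
  have W: "poly_subspace W" "card W = CARD('a) * CARD('a) ^ d"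
    using assms(1) unfolding admissible_def by simp_all
  then have "CARD('a) * card (vanishing_at W a) = CARD('a) * CARD('a) ^ d"
    using card_vanishing_at[OF W(1) assms(3)] by simp
  moreover have "insert a (common_roots W - X) \<subseteq> common_roots (vanishing_at W a) - (X - {a})"
    using common_roots_vanishing_at assms(2) by blast
  from card_mono[OF _ this] assms(2)
  have "Suc (card (common_roots W - X)) \<le> card (common_roots (vanishing_at W a) - (X - {a}))"
    by simp
  ultimately show ?thesis
    using assms(1) poly_subspace_vanishing_at unfolding admissible_def vanishing_at_def by auto
qed

lemma vandermonde_tail_le_card_separating_subsets:
  fixes W :: "'a::{finite,field} poly set"
  assumes "finite X" "card X = g + b" "admissible k W X d b" "k \<le> CARD('a)"
  shows "vandermonde_tail t d g b \<le> card (separating_subsets W X t)"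
  using assms
proof (induction X arbitrary: W d g b t rule: finite_psubset_induct)
  case (psubset X)
  note X = psubset.hyps and card_X = psubset.prems(1) and W = psubset.prems(2)
    and k = psubset.prems(3)
  have card_remove: "card (X - {a}) + 1 = card X" and "X - {a} \<subset> X" if "a \<in> X" for a
    using card_Suc_Diff1[OF X that] that by auto
  note IH = psubset.IH[OF this(2) _ _ k]
  consider "d = 0" | "t = 0" "0 < d" | d' t' where "d = Suc d'" "t = Suc t'"
    using not0_implies_Suc by blast
  then show ?case
  proof cases
    case 1
    then have "W = {0}"
      using W unfolding admissible_def
      by (metis card_1_singletonE poly_subspace_def power_0 singletonD)
    then show ?thesis
      using vandermonde_tail_le_choose card_X X by (simp add: card_separating_subsets_zero)
  next
    case 2
    then show ?thesis by (simp add: vandermonde_tail_eq_0)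
  next
    case (3 d' t')
    show ?thesis
    proof (cases "X \<inter> common_roots W = {}")
      case False
      then obtain a where a: "a \<in> X" "a \<in> common_roots W" by blast
      then obtain b' where b: "b = Suc b'"
        using admissible_common_root_bad W k 3 not0_implies_Suc by blast
      moreover have "card (X - {a}) = g + b'" using card_remove[OF a(1)] card_X b by simp
      ultimately have "vandermonde_tail t'' d g b' \<le> card (separating_subsets W (X - {a}) t'')"
        for t''
        using IH[OF a(1)] admissible_remove_common_root[OF _ a] W by simp
      then show ?thesis
        unfolding 3 b using vandermonde_tail_le_step_common_root[OF X a] by simp
    next
      case True
      show ?thesis
      proof (cases g)
        case 0
        then show ?thesis by (simp add: 3 vandermonde_tail_eq_0)
      next
        case (Suc g')
        then obtain a where a: "a \<in> X" using card_X by fastforce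
        have card_Xa: "card (X - {a}) = g' + b" using card_remove[OF a] card_X Suc by simp
        have "a \<notin> common_roots W" using True a by blast
        then have "admissible k (vanishing_at W a) (X - {a}) d' b"
          using admissible_vanishing_at[OF _ a] W 3 by simp
        then have "vandermonde_tail t' d' g' b
            \<le> card (separating_subsets (vanishing_at W a) (X - {a}) t')"
          by (rule IH[OF a card_Xa])
        moreover have "vandermonde_tail t d g' b \<le> card (separating_subsets W (X - {a}) t)"
          by (rule IH[OF a card_Xa admissible_remove[OF W]])
        ultimately show ?thesis
          unfolding 3 Suc using vandermonde_tail_le_step[OF X a] by simp
      qed
    qed
  qed
qed

lemma affine_span_0_eq_range: "affine_span 0 b l = range (\<lambda>x. \<Sum>j<l. smult (x j) (b j))"
  unfolding affine_span_def by auto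

lemma poly_subspace_affine_span_0: "poly_subspace (affine_span 0 b l)"
  unfolding poly_subspace_def affine_span_0_eq_range
proof (intro conjI ballI allI impI)
  show "0 \<in> range (\<lambda>x. \<Sum>j<l. smult (x j) (b j))"
  proof
    show "0 = (\<Sum>j<l. smult ((\<lambda>_. 0) j) (b j))" by simp
  qed simp
next
  fix v w assume "v \<in> range (\<lambda>x. \<Sum>j<l. smult (x j) (b j))"
    "w \<in> range (\<lambda>x. \<Sum>j<l. smult (x j) (b j))"
  then obtain x y where "v = (\<Sum>j<l. smult (x j) (b j))" "w = (\<Sum>j<l. smult (y j) (b j))"
    by blast
  then have "v + w = (\<Sum>j<l. smult (x j + y j) (b j))"
    by (simp add: sum.distrib smult_add_left)
  then show "v + w \<in> range (\<lambda>x. \<Sum>j<l. smult (x j) (b j))" by auto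
next
  fix c w assume "w \<in> range (\<lambda>x. \<Sum>j<l. smult (x j) (b j))"
  then obtain x where "w = (\<Sum>j<l. smult (x j) (b j))" by blast
  moreover have "smult c (\<Sum>j<l. smult (x j) (b j)) = (\<Sum>j<l. smult (c * x j) (b j))"
    by (induction l) (simp_all add: smult_add_right)
  ultimately have "smult c w = (\<Sum>j<l. smult (c * x j) (b j))" by simp
  then show "smult c w \<in> range (\<lambda>x. \<Sum>j<l. smult (x j) (b j))" by auto
qed

lemma mem_affine_span_iff:
  assumes "f \<in> affine_span z b l"
  shows "g \<in> affine_span z b l \<longleftrightarrow> g - f \<in> affine_span 0 b l"
proof -
  have translate: "h \<in> affine_span z b l \<longleftrightarrow> h - z \<in> affine_span 0 b l" for h
    unfolding affine_span_def by (auto simp: algebra_simps)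
  have "f - z \<in> affine_span 0 b l" using assms translate by blast
  moreover have "g - z = (g - f) + (f - z)" "g - f = (g - z) - (f - z)" by simp_all
  ultimately show ?thesis
    using translate poly_subspace_affine_span_0 poly_subspace_diff
    unfolding poly_subspace_def by metis
qed

lemma degree_affine_span_less:
  assumes "degree z < k" "\<forall>j<l. degree (b j) < k" "g \<in> affine_span z b l"
  shows "degree g < k"
proof -
  obtain x where g: "g = z + (\<Sum>j<l. smult (x j) (b j))"
    using assms(3) unfolding affine_span_def by blast
  have "degree (smult (x j) (b j)) < k" if "j < l" for j
    using assms(2) that degree_smult_le le_less_trans by blast
  then have "degree (\<Sum>j<l. smult (x j) (b j)) < k"
    using assms(1) by (intro degree_sum_less) auto
  then show ?thesis unfolding g using assms(1) by (rule degree_add_less[rotated])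
qed

lemma card_affine_span:
  fixes b :: "nat \<Rightarrow> 'a::{finite,field} poly"
  assumes "lin_indep_polys b l"
  shows "card (affine_span z b l) = CARD('a) ^ l"
proof -
  define comb where "comb = (\<lambda>x. z + (\<Sum>j<l. smult (x j) (b j)))"
  have "inj_on comb ({..<l} \<rightarrow>\<^sub>E UNIV)"
  proof (rule inj_onI)
    fix x y assume x: "x \<in> {..<l} \<rightarrow>\<^sub>E UNIV" and y: "y \<in> {..<l} \<rightarrow>\<^sub>E UNIV"
      and "comb x = comb y"
    then have "(\<Sum>j<l. smult (x j - y j) (b j)) = 0"
      by (simp add: comb_def sum_subtractf smult_diff_left)
    then have "\<forall>j<l. x j = y j"
      using assms unfolding lin_indep_polys_def by fastforce
    then show "x = y" using x y by (intro extensionalityI[of _ "{..<l}"]) (auto simp: PiE_def)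
  qed
  moreover have "comb ` ({..<l} \<rightarrow>\<^sub>E UNIV) = affine_span z b l"
  proof
    show "comb ` ({..<l} \<rightarrow>\<^sub>E UNIV) \<subseteq> affine_span z b l"
      unfolding comb_def affine_span_def by blast
    show "affine_span z b l \<subseteq> comb ` ({..<l} \<rightarrow>\<^sub>E UNIV)"
    proof
      fix g assume "g \<in> affine_span z b l"
      then obtain x where "g = comb x" unfolding affine_span_def comb_def by blast
      also have "comb x = comb (restrict x {..<l})" unfolding comb_def by simp
      finally show "g \<in> comb ` ({..<l} \<rightarrow>\<^sub>E UNIV)" by auto
    qed
  qed
  ultimately have "card (affine_span z b l) = card ({..<l} \<rightarrow>\<^sub>E (UNIV :: 'a set))"
    using card_image by fastforce
  then show ?thesis by (simp add: card_PiE)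
qed

lemma unique_interpolant_iff_separates:
  assumes V: "poly_subspace V" and U: "\<And>g. g \<in> U \<longleftrightarrow> g - f \<in> V"
  shows "{g \<in> U. \<forall>a\<in>S. poly g a = poly f a} = {f} \<longleftrightarrow> separates V S"
proof
  assume unique: "{g \<in> U. \<forall>a\<in>S. poly g a = poly f a} = {f}"
  show "separates V S" unfolding separates_def
  proof (intro ballI impI)
    fix w assume "w \<in> V" "\<forall>a\<in>S. poly w a = 0"
    then have "f + w \<in> {g \<in> U. \<forall>a\<in>S. poly g a = poly f a}" using U by simp
    then show "w = 0" using unique by simp
  qed
next
  assume "separates V S"
  then have "g = f" if "g \<in> U" "\<forall>a\<in>S. poly g a = poly f a" for g
    using that U unfolding separates_def by fastforce
  moreover have "f \<in> U" using U V unfolding poly_subspace_def by simp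
  ultimately show "{g \<in> U. \<forall>a\<in>S. poly g a = poly f a} = {f}" by blast
qed

lemma injective_evaluation_iff_separates:
  assumes V: "poly_subspace V" and U: "\<And>g. g \<in> U \<longleftrightarrow> g - f \<in> V"
  shows "(\<forall>g\<in>U. \<forall>h\<in>U. (\<forall>a\<in>S. poly g a = poly h a) \<longrightarrow> g = h) \<longleftrightarrow> separates V S"
proof
  assume inj: "\<forall>g\<in>U. \<forall>h\<in>U. (\<forall>a\<in>S. poly g a = poly h a) \<longrightarrow> g = h"
  show "separates V S" unfolding separates_def
  proof (intro ballI impI)
    fix w assume w: "w \<in> V" "\<forall>a\<in>S. poly w a = 0"
    have "f + w \<in> U" "f \<in> U" using U V w unfolding poly_subspace_def by simp_all
    moreover have "\<forall>a\<in>S. poly (f + w) a = poly f a" using w(2) by simp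
    ultimately have "f + w = f" using inj by blast
    then show "w = 0" by simp
  qed
next
  assume sep: "separates V S"
  show "\<forall>g\<in>U. \<forall>h\<in>U. (\<forall>a\<in>S. poly g a = poly h a) \<longrightarrow> g = h"
  proof (intro ballI impI)
    fix g h assume "g \<in> U" "h \<in> U" "\<forall>a\<in>S. poly g a = poly h a"
    moreover have "g - h = (g - f) - (h - f)" by simp
    ultimately have "g - h \<in> V" "\<forall>a\<in>S. poly (g - h) a = 0"
      using U poly_subspace_diff[OF V, of "g - f" "h - f"] by auto
    then have "g - h = 0" using sep unfolding separates_def by blast
    then show "g = h" by simp
  qed
qed

theorem theorem2:
  fixes \<gamma> :: "'a::{finite,field}"
    and m n k s l t :: nat
    and y :: "nat \<Rightarrow> nat \<Rightarrow> 'a"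
    and z f :: "'a poly"
    and b :: "nat \<Rightarrow> 'a poly"
  defines "q \<equiv> card (UNIV :: 'a set)"
  defines "N \<equiv> n div m"
  defines "R \<equiv> real k / real n"
  defines "close \<equiv> (\<lambda>g. real (frs_dist \<gamma> m N y g)
             \<le> (real s / real (s + 1)) * (1 - real m * R / (real m - real s + 1)) * real N)"
  defines "U \<equiv> affine_span z b l"
  assumes prim: "primitive_elem \<gamma>"
    and m_pos: "1 \<le> m" and n_le: "n \<le> q - 1" and m_dvd: "m dvd n"
    and k_pos: "1 \<le> k" and k_lt: "k < n"
    and s_range: "1 \<le> s" "s \<le> m"
    and l_le: "l \<le> s - 1"
    and z_deg: "degree z < k"
    and b_deg: "\<forall>j<l. degree (b j) < k"
    and b_indep: "lin_indep_polys b l"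
    and decoder: "\<forall>g. degree g < k \<and> close g \<longrightarrow> g \<in> U"
    and f_deg: "degree f < k"
    and f_close: "close f"
    and t_range: "l \<le> t" "t \<le> q - 1"
  shows "(\<Sum>i=l..t. real ((q - k + l - 1) choose i) * real ((k - l) choose (t - i)))
             / real ((q - 1) choose t)
         \<le> real (card {S :: 'a set. S \<subseteq> UNIV - {0} \<and> card S = t \<and>
                      {g \<in> U. \<forall>a\<in>S. poly g a = poly f a} = {f}})
             / real ((q - 1) choose t)
       \<and> (\<forall>S :: 'a set. S \<subseteq> UNIV - {0} \<and> card S = t \<longrightarrow>
            ({g \<in> U. \<forall>a\<in>S. poly g a = poly f a} = {f} \<longleftrightarrow>
             (\<forall>g\<in>U. \<forall>h\<in>U. (\<forall>a\<in>S. poly g a = poly h a) \<longrightarrow> g = h)))"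
proof -
  define V where "V = affine_span 0 b l"
  have f_U: "f \<in> U" using decoder f_deg f_close by blast
  have U_iff: "g \<in> U \<longleftrightarrow> g - f \<in> V" for g
    unfolding U_def V_def using mem_affine_span_iff f_U[unfolded U_def] .
  have V: "poly_subspace V" "\<forall>w\<in>V. degree w < k" "card V = q ^ l"
    using poly_subspace_affine_span_0 degree_affine_span_less[OF _ b_deg, of 0] k_pos
      card_affine_span[OF b_indep] unfolding V_def q_def by auto
  have k_le_q: "k \<le> q" using k_lt n_le by simp
  have "l \<le> k"
    using dim_plus_card_common_roots_le[OF V(2) V(3)[unfolded q_def]] k_le_q
    unfolding q_def by (cases "l = 0") auto
  then have "admissible k V (UNIV - {0}) l (k - l)"
    using V unfolding admissible_def q_def by simp
  moreover have "card (UNIV - {0::'a}) = (q - k + l - 1) + (k - l)"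
    using \<open>l \<le> k\<close> k_lt n_le unfolding q_def by (simp add: card_Diff_subset)
  ultimately have "vandermonde_tail t l (q - k + l - 1) (k - l)
      \<le> card (separating_subsets V (UNIV - {0}) t)"
    using k_le_q unfolding q_def by (intro vandermonde_tail_le_card_separating_subsets) simp_all
  moreover have "separating_subsets V (UNIV - {0}) t
      = {S. S \<subseteq> UNIV - {0} \<and> card S = t \<and> {g \<in> U. \<forall>a\<in>S. poly g a = poly f a} = {f}}"
    unfolding separating_subsets_def using unique_interpolant_iff_separates[OF V(1) U_iff] by simp
  ultimately have "real (vandermonde_tail t l (q - k + l - 1) (k - l))
      \<le> real (card {S. S \<subseteq> UNIV - {0} \<and> card S = t \<and>
                    {g \<in> U. \<forall>a\<in>S. poly g a = poly f a} = {f}})"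
    by simp
  moreover have "real (vandermonde_tail t l (q - k + l - 1) (k - l))
      = (\<Sum>i=l..t. real ((q - k + l - 1) choose i) * real ((k - l) choose (t - i)))"
    by (simp add: vandermonde_tail_eq_sum)
  ultimately show ?thesis
    using unique_interpolant_iff_separates[OF V(1) U_iff]
      injective_evaluation_iff_separates[OF V(1) U_iff]
    by (simp add: divide_right_mono)
qed

end
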